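(* (Symmetry extension lemma.) Let $H$ and $L$ be linear subspaces of $\mathbb{R}^n$ such that $H\cap L^\perp=\{o\}$ and $\dim H<\dim L$. If $E\subset S^{n-1}$ is nonempty, closed, invariant under $R_H$, and invariant under every element of $O(n)_{L^\perp}$, then $E$ is invariant under every element of $O(n)_{(H+L)^\perp}$. The same conclusion holds if invariance under $R_H$ is replaced by invariance under $R_{H^\perp}$.
   Context: For a linear subspace $S$ of $\mathbb{R}^n$, $O(n)_S$ is the pointwise stabilizer of $S$ in $O(n)$ (isometries in $O(n)$ acting as the identity on $S$), $S^\perp$ is its orthogonal complement, and $R_S$ is the reflection $x\mapsto 2(x|S)-x$ with $x|S$ the orthogonal projection onto $S$. A set $E$ is invariant under $\phi$ if $\phi E=E$. $o$ is the origin, $S^{n-1}$ the unit sphere, $H+L$ the vector sum. *)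

theory Defs
  imports "HOL-Analysis.Analysis"
begin

definition orth_proj :: "'a::euclidean_space set \<Rightarrow> 'a \<Rightarrow> 'a" where
  "orth_proj S x = (THE y. y \<in> S \<and> x - y \<in> orthogonal_comp S)"

definition refl_sub :: "'a::euclidean_space set \<Rightarrow> 'a \<Rightarrow> 'a" where
  "refl_sub S x = 2 *\<^sub>R orth_proj S x - x"

definition stab :: "'a::euclidean_space set \<Rightarrow> ('a \<Rightarrow> 'a) set" where
  "stab S = {f. orthogonal_transformation f \<and> (\<forall>x\<in>S. f x = x)}"

definition vsum_set :: "'a::euclidean_space set \<Rightarrow> 'a set \<Rightarrow> 'a set" where
  "vsum_set H L = {h + l | h l. h \<in> H \<and> l \<in> L}"

end

theory Submission
  imports Defs
begin

text \<open>Let L' be the image of L under R_H; since R_{H^perp} = - R_H, it is also the image of L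
  under R_{H^perp}. Conjugating by the reflection, E is invariant under the stabilizers of both
  L^perp and L'^perp. Because H meets L^perp trivially, a vector orthogonal to L and L' is
  orthogonal to H, so H + L = L + L'; and dim H < dim L forces L and L' to share a unit vector w
  by counting dimensions.

  It remains to show that a compact set E invariant under the stabilizers of L1^perp and L2^perp,
  where w lies in L1 and L2, contains every y with |y| = |x| and y - x in L1 + L2 once it contains
  x. In a compact set invariant under both stabilizers, a point closest to L1 has its component
  orthogonal to L1 also orthogonal to L2. Two points of equal norm on the same
  translate of L1 + L2 whose components orthogonal to L1 both have this property are
  congruent under the stabilizer of L1^perp. Applied to the points of E, and to the points at
  the same distance from E as y, on the sphere slices through x and y, this puts a point of E
  at distance zero from y.\<close>

lemma mem_orthogonal_comp_iff: "x \<in> orthogonal_comp S \<longleftrightarrow> (\<forall>y\<in>S. y \<bullet> x = 0)"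
  by (simp add: orthogonal_comp_def orthogonal_def)

lemma orth_proj_unique:
  fixes S :: "'a::euclidean_space set"
  assumes S: "subspace S" and "y \<in> S" "x - y \<in> orthogonal_comp S" "y' \<in> S" "x - y' \<in> orthogonal_comp S"
  shows "y = y'"
proof -
  have "y' - y \<in> S"
    using assms by (simp add: subspace_diff)
  moreover have "y' - y \<in> orthogonal_comp S"
    using subspace_diff[OF subspace_orthogonal_comp assms(3) assms(5)] by simp
  ultimately have "y' - y \<in> S \<inter> orthogonal_comp S"
    by simp
  then show ?thesis
    unfolding orthogonal_Int_0[OF S] by simp
qed

lemma orth_proj_in_and_perp:
  fixes S :: "'a::euclidean_space set"
  assumes "subspace S"
  shows "orth_proj S x \<in> S \<and> x - orth_proj S x \<in> orthogonal_comp S"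
proof -
  have "x \<in> S + orthogonal_comp S"
    using subspace_sum_orthogonal_comp[OF assms] by simp
  then obtain y z where "y \<in> S" "z \<in> orthogonal_comp S" "x = y + z"
    by (rule set_plus_elim)
  then have "\<exists>!y. y \<in> S \<and> x - y \<in> orthogonal_comp S"
    using orth_proj_unique[OF assms] by auto
  then show ?thesis
    unfolding orth_proj_def by (rule theI')
qed

lemma orth_proj_in: "subspace S \<Longrightarrow> orth_proj S x \<in> S"
  and orth_proj_perp: "subspace S \<Longrightarrow> x - orth_proj S x \<in> orthogonal_comp S"
  using orth_proj_in_and_perp by blast+

lemma orth_proj_eqI:
  "subspace S \<Longrightarrow> y \<in> S \<Longrightarrow> x - y \<in> orthogonal_comp S \<Longrightarrow> orth_proj S x = y"
  using orth_proj_unique orth_proj_in orth_proj_perp by blast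

lemma orth_proj_id: "subspace S \<Longrightarrow> x \<in> S \<Longrightarrow> orth_proj S x = x"
  by (simp add: orth_proj_eqI subspace_0 subspace_orthogonal_comp)

lemma linear_orth_proj:
  assumes "subspace S"
  shows "linear (orth_proj S)"
proof
  fix x y
  show "orth_proj S (x + y) = orth_proj S x + orth_proj S y"
    using orth_proj_in[OF assms] orth_proj_perp[OF assms]
      subspace_add[OF subspace_orthogonal_comp, of "x - orth_proj S x" S "y - orth_proj S y"]
    by (intro orth_proj_eqI assms) (auto simp: subspace_add[OF assms] algebra_simps)
next
  fix c x
  show "orth_proj S (c *\<^sub>R x) = c *\<^sub>R orth_proj S x"
    using orth_proj_in[OF assms] orth_proj_perp[OF assms]
      subspace_scale[OF subspace_orthogonal_comp, of "x - orth_proj S x" S c]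
    by (intro orth_proj_eqI assms) (auto simp: subspace_scale[OF assms] algebra_simps)
qed

lemma orth_proj_add_in:
  assumes "subspace S" "w \<in> S"
  shows "orth_proj S (x + w) = orth_proj S x + w"
  using assms orth_proj_in[OF assms(1)] orth_proj_perp[OF assms(1), of x]
  by (intro orth_proj_eqI) (auto simp: subspace_add)

lemma orth_proj_orthogonal_comp:
  assumes "subspace S"
  shows "orth_proj (orthogonal_comp S) x = x - orth_proj S x"
  using orth_proj_perp[OF assms] orth_proj_in[OF assms] orthogonal_comp_subset[of S]
  by (intro orth_proj_eqI subspace_orthogonal_comp) auto

lemma orthogonal_orth_proj: "subspace S \<Longrightarrow> orthogonal (orth_proj S x) (y - orth_proj S y)"
  using orth_proj_in[of S x] orth_proj_perp[of S y] by (simp add: mem_orthogonal_comp_iff orthogonal_def)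

lemma inner_orth_proj_commute:
  assumes "subspace S"
  shows "orth_proj S x \<bullet> y = x \<bullet> orth_proj S y"
  using orthogonal_orth_proj[OF assms, of x y] orthogonal_orth_proj[OF assms, of y x]
  by (simp add: orthogonal_def inner_diff_right inner_diff_left inner_commute)

lemma norm_orth_proj_Pythagorean:
  "subspace S \<Longrightarrow> (norm x)\<^sup>2 = (norm (orth_proj S x))\<^sup>2 + (norm (x - orth_proj S x))\<^sup>2"
  using norm_add_Pythagorean[OF orthogonal_orth_proj, of S x x] by simp

lemma refl_sub_orthogonal_comp:
  "subspace S \<Longrightarrow> refl_sub (orthogonal_comp S) x = - refl_sub S x"
  by (simp add: refl_sub_def orth_proj_orthogonal_comp algebra_simps scaleR_2)

lemma refl_sub_id: "subspace S \<Longrightarrow> x \<in> S \<Longrightarrow> refl_sub S x = x"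
  by (simp add: refl_sub_def orth_proj_id scaleR_2)

lemma orthogonal_transformation_refl_sub:
  assumes "subspace S"
  shows "orthogonal_transformation (refl_sub S)"
  unfolding orthogonal_transformation
proof (intro conjI allI)
  show "linear (refl_sub S)"
    using linear_orth_proj[OF assms]
    by (intro linearI) (simp_all add: refl_sub_def linear_add linear_scale algebra_simps)
next
  fix x
  have "refl_sub S x = orth_proj S x + - (x - orth_proj S x)"
    by (simp add: refl_sub_def scaleR_2)
  moreover have "orthogonal (orth_proj S x) (- (x - orth_proj S x))"
    using orthogonal_orth_proj[OF assms, of x x] by (simp add: orthogonal_def inner_diff_right)
  ultimately have "(norm (refl_sub S x))\<^sup>2 = (norm x)\<^sup>2"
    using norm_add_Pythagorean norm_orth_proj_Pythagorean[OF assms] by (metis norm_minus_cancel)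
  then show "norm (refl_sub S x) = norm x"
    by (simp add: power2_eq_iff_nonneg)
qed

lemma refl_sub_swap:
  fixes a b :: "'a::euclidean_space"
  assumes "norm a = norm b"
  shows "refl_sub (orthogonal_comp {a - b}) a = b"
proof -
  have "(a - b) \<bullet> (a + b) = a \<bullet> a - b \<bullet> b"
    by (simp add: inner_diff_left inner_add_right inner_commute[of b a])
  also have "\<dots> = 0"
    using assms by (simp add: dot_square_norm)
  finally have "(a - b) \<bullet> (a + b) = 0" .
  then have "(1/2) *\<^sub>R (a + b) \<in> orthogonal_comp {a - b}"
    by (simp add: mem_orthogonal_comp_iff)
  moreover have "a - (1/2) *\<^sub>R (a + b) = (1/2) *\<^sub>R (a - b)"
    by (simp add: algebra_simps flip: scaleR_add_left)
  then have "a - (1/2) *\<^sub>R (a + b) \<in> orthogonal_comp (orthogonal_comp {a - b})"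
    using orthogonal_comp_subset[of "{a - b}"]
    by (auto intro: subspace_scale[OF subspace_orthogonal_comp])
  ultimately have "orth_proj (orthogonal_comp {a - b}) a = (1/2) *\<^sub>R (a + b)"
    by (intro orth_proj_eqI subspace_orthogonal_comp)
  then show ?thesis
    by (simp add: refl_sub_def)
qed

lemma subspace_vsum_set: "subspace A \<Longrightarrow> subspace B \<Longrightarrow> subspace (vsum_set A B)"
  unfolding vsum_set_def by (rule subspace_sums)

lemma subset_vsum_set: "subspace A \<Longrightarrow> subspace B \<Longrightarrow> A \<subseteq> vsum_set A B \<and> B \<subseteq> vsum_set A B"
  by (force simp: vsum_set_def subspace_0)

lemma orthogonal_comp_vsum_set:
  assumes "subspace A" "subspace B"
  shows "orthogonal_comp (vsum_set A B) = orthogonal_comp A \<inter> orthogonal_comp B"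
proof -
  have "orthogonal_comp (vsum_set A B) \<subseteq> orthogonal_comp A \<inter> orthogonal_comp B"
    using subset_vsum_set[OF assms] by (auto dest: orthogonal_comp_anti_mono)
  moreover have "orthogonal_comp A \<inter> orthogonal_comp B \<subseteq> orthogonal_comp (vsum_set A B)"
    by (auto simp: mem_orthogonal_comp_iff vsum_set_def inner_add_left)
  ultimately show ?thesis
    by blast
qed

lemma stab_antimono: "A \<subseteq> B \<Longrightarrow> stab B \<subseteq> stab A"
  by (auto simp: stab_def)

lemma stab_diff_in:
  fixes L :: "'a::euclidean_space set"
  assumes "subspace L" "f \<in> stab (orthogonal_comp L)"
  shows "f z - z \<in> L"
proof -
  have "v \<bullet> (f z - z) = 0" if "v \<in> orthogonal_comp L" for v
  proof -
    have "v \<bullet> f z = f v \<bullet> f z"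
      using that assms(2) by (simp add: stab_def)
    also have "\<dots> = v \<bullet> z"
      using assms(2) by (simp add: stab_def orthogonal_transformation_def)
    finally show ?thesis
      by (simp add: inner_diff_right)
  qed
  then have "f z - z \<in> orthogonal_comp (orthogonal_comp L)"
    by (simp add: mem_orthogonal_comp_iff)
  then show ?thesis
    using orthogonal_comp_self[OF assms(1)] by simp
qed

lemma refl_sub_in_stab:
  assumes "c \<in> L"
  shows "refl_sub (orthogonal_comp {c}) \<in> stab (orthogonal_comp L)"
  using assms
  by (auto simp: stab_def orthogonal_transformation_refl_sub subspace_orthogonal_comp
      mem_orthogonal_comp_iff intro!: refl_sub_id)

lemma stab_transitive:
  fixes L :: "'a::euclidean_space set"
  assumes "subspace L" "q \<in> orthogonal_comp L" "a \<in> L" "b \<in> L" "norm a = norm b"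
  shows "\<exists>g\<in>stab (orthogonal_comp L). g (q + a) = q + b"
proof -
  let ?g = "refl_sub (orthogonal_comp {a - b})"
  have g: "?g \<in> stab (orthogonal_comp L)"
    using assms by (intro refl_sub_in_stab) (simp add: subspace_diff)
  then have "?g (q + a) = ?g q + ?g a"
    by (simp add: stab_def orthogonal_transformation_def linear_add)
  also have "\<dots> = q + b"
    using g assms(2) refl_sub_swap[OF assms(5)] by (simp add: stab_def)
  finally show ?thesis
    using g by blast
qed

lemma stab_rotates_onto_line:
  fixes L :: "'a::euclidean_space set"
  assumes L: "subspace L" and w: "w \<in> L" "norm w = 1"
  shows "\<exists>g\<in>stab (orthogonal_comp L). g z = (z - orth_proj L z) + norm (orth_proj L z) *\<^sub>R w"
proof -
  have "\<exists>g\<in>stab (orthogonal_comp L).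
      g ((z - orth_proj L z) + orth_proj L z) = (z - orth_proj L z) + norm (orth_proj L z) *\<^sub>R w"
    using w by (intro stab_transitive L orth_proj_perp orth_proj_in) (auto simp: subspace_scale[OF L])
  then show ?thesis
    by simp
qed

lemma stab_conj:
  fixes R :: "'a::euclidean_space \<Rightarrow> 'a"
  assumes R: "orthogonal_transformation R" and f: "f \<in> stab (orthogonal_comp (R ` L))"
  shows "inv R \<circ> f \<circ> R \<in> stab (orthogonal_comp L)"
  unfolding stab_def
proof (intro CollectI conjI ballI)
  show "orthogonal_transformation (inv R \<circ> f \<circ> R)"
    using f by (auto simp: stab_def intro!: orthogonal_transformation_compose R orthogonal_transformation_inv)
  fix x
  assume "x \<in> orthogonal_comp L"
  then have "R x \<in> orthogonal_comp (R ` L)"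
    using R by (auto simp: mem_orthogonal_comp_iff orthogonal_transformation_def)
  then show "(inv R \<circ> f \<circ> R) x = x"
    using f orthogonal_transformation_inj[OF R] by (simp add: stab_def)
qed

lemma stab_image_invariant:
  fixes R :: "'a::euclidean_space \<Rightarrow> 'a"
  assumes R: "orthogonal_transformation R" and "R ` E = E"
    and inv: "\<forall>f\<in>stab (orthogonal_comp L). f ` E = E"
  shows "\<forall>f\<in>stab (orthogonal_comp (R ` L)). f ` E = E"
proof
  fix f
  assume "f \<in> stab (orthogonal_comp (R ` L))"
  then have g: "(inv R \<circ> f \<circ> R) ` E = E"
    using inv stab_conj[OF R] by blast
  have "f = R \<circ> (inv R \<circ> f \<circ> R) \<circ> inv R"
    using orthogonal_transformation_surj[OF R] by (auto simp: surj_f_inv_f)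
  moreover have "inv R ` E = E"
    using \<open>R ` E = E\<close> orthogonal_transformation_bij[OF R] by (metis bij_is_inj image_inv_f_f)
  ultimately show "f ` E = E"
    using g \<open>R ` E = E\<close> by (metis image_comp)
qed

lemma infdist_orthogonal_transformation:
  assumes "orthogonal_transformation f" "f ` E = E"
  shows "infdist (f z) E = infdist z E"
proof -
  have "dist (f z) (f a) = dist z a" for a
    using assms(1) by (simp add: dist_norm orthogonal_transformation linear_diff[symmetric])
  then have "infdist (f z) (f ` E) = infdist z E"
    by (simp add: infdist_def image_image)
  then show ?thesis
    using assms(2) by simp
qed

definition sphere_slice :: "real \<Rightarrow> 'a::euclidean_space \<Rightarrow> 'a set \<Rightarrow> 'a set" where
  "sphere_slice r x M = sphere 0 r \<inter> {z. z - x \<in> M}"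

lemma compact_Int_sphere_slice:
  fixes A M :: "'a::euclidean_space set"
  assumes "closed A" "subspace M"
  shows "compact (A \<inter> sphere_slice r x M)"
proof -
  have "{z. z - x \<in> M} = (+) x ` M"
    by (force simp: algebra_simps)
  then have "closed {z. z - x \<in> M}"
    using closed_subspace[OF assms(2)] closed_translation by metis
  then show ?thesis
    unfolding sphere_slice_def
    using assms(1) by (intro closed_Int_compact compact_Int_closed) auto
qed

lemma stab_image_sphere_slice_subset:
  fixes L M :: "'a::euclidean_space set"
  assumes "subspace L" "subspace M" "L \<subseteq> M" "f \<in> stab (orthogonal_comp L)"
  shows "f ` sphere_slice r x M \<subseteq> sphere_slice r x M"
proof
  fix y
  assume "y \<in> f ` sphere_slice r x M"
  then obtain z where z: "norm z = r" "z - x \<in> M" "y = f z"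
    by (auto simp: sphere_slice_def)
  have "norm (f z) = norm z"
    using assms(4) by (simp add: stab_def orthogonal_transformation_norm)
  moreover have "(f z - z) + (z - x) \<in> M"
    using stab_diff_in[OF assms(1,4)] z(2) assms(2,3) by (blast intro: subspace_add)
  ultimately show "y \<in> sphere_slice r x M"
    using z by (simp add: sphere_slice_def)
qed

text \<open>Rotating the L1-component of a point closest to L1 onto w, and then its L2-component onto w,
  leaves off L1 only the part of its residual orthogonal to L2; minimality of the distance to L1
  forces that part to be the whole residual.\<close>

lemma invariant_compact_has_point_with_residual_perp:
  fixes L1 L2 Z :: "'a::euclidean_space set"
  assumes L1: "subspace L1" and L2: "subspace L2"
    and w: "w \<in> L1" "w \<in> L2" "norm w = 1"
    and "compact Z" "Z \<noteq> {}"
    and inv: "\<forall>f\<in>stab (orthogonal_comp L1) \<union> stab (orthogonal_comp L2). f ` Z \<subseteq> Z"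
  shows "\<exists>z\<in>Z. z - orth_proj L1 z \<in> orthogonal_comp L2"
proof -
  define dist_L1 where "dist_L1 z = norm (z - orth_proj L1 z)" for z
  have "continuous_on Z dist_L1"
    unfolding dist_L1_def using linear_orth_proj[OF L1]
    by (intro continuous_intros linear_continuous_on) (simp add: linear_conv_bounded_linear)
  then obtain z0 where z0: "z0 \<in> Z" and min: "\<And>z. z \<in> Z \<Longrightarrow> dist_L1 z0 \<le> dist_L1 z"
    using continuous_attains_inf[OF \<open>compact Z\<close> \<open>Z \<noteq> {}\<close>] by blast
  define q where "q = z0 - orth_proj L1 z0"
  define z1 where "z1 = q + norm (orth_proj L1 z0) *\<^sub>R w"
  define a where "a = q - orth_proj L2 q"
  define z2 where "z2 = a + norm (orth_proj L2 z1) *\<^sub>R w"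
  obtain g where "g \<in> stab (orthogonal_comp L1)" "g z0 = z1"
    using stab_rotates_onto_line[OF L1 w(1,3), of z0] by (auto simp: z1_def q_def)
  then have "z1 \<in> Z"
    using inv z0 by blast
  have "z1 - orth_proj L2 z1 = a"
    using w by (simp add: z1_def a_def orth_proj_add_in[OF L2] subspace_scale[OF L2])
  then obtain h where "h \<in> stab (orthogonal_comp L2)" "h z1 = z2"
    using stab_rotates_onto_line[OF L2 w(2,3), of z1] by (auto simp: z2_def)
  then have "z2 \<in> Z"
    using inv \<open>z1 \<in> Z\<close> by blast
  have "norm q = dist_L1 z0"
    by (simp add: dist_L1_def q_def)
  also have "\<dots> \<le> dist_L1 z2"
    using min[OF \<open>z2 \<in> Z\<close>] .
  also have "\<dots> = norm (a - orth_proj L1 a)"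
    using w by (simp add: dist_L1_def z2_def orth_proj_add_in[OF L1] subspace_scale[OF L1])
  also have "\<dots> \<le> norm a"
    using norm_orth_proj_Pythagorean[OF L1, of a] by (simp add: power2_le_imp_le)
  finally have "(norm q)\<^sup>2 \<le> (norm a)\<^sup>2"
    by (simp add: power_mono)
  then have "orth_proj L2 q = 0"
    using norm_orth_proj_Pythagorean[OF L2, of q] by (simp add: a_def)
  then have "q \<in> orthogonal_comp L2"
    using orth_proj_perp[OF L2, of q] by simp
  then show ?thesis
    using z0 by (auto simp: q_def)
qed

lemma invariant_sphere_slice_has_point_with_residual_perp:
  fixes L1 L2 A :: "'a::euclidean_space set"
  assumes L1: "subspace L1" and L2: "subspace L2"
    and w: "w \<in> L1" "w \<in> L2" "norm w = 1"
    and "closed A" "v \<in> A"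
    and inv: "\<forall>f\<in>stab (orthogonal_comp L1) \<union> stab (orthogonal_comp L2). f ` A \<subseteq> A"
  shows "\<exists>z\<in>A \<inter> sphere_slice (norm v) v (vsum_set L1 L2). z - orth_proj L1 z \<in> orthogonal_comp L2"
proof (rule invariant_compact_has_point_with_residual_perp[OF L1 L2 w])
  let ?S = "sphere_slice (norm v) v (vsum_set L1 L2)"
  have M: "subspace (vsum_set L1 L2)" "L1 \<subseteq> vsum_set L1 L2" "L2 \<subseteq> vsum_set L1 L2"
    using subspace_vsum_set[OF L1 L2] subset_vsum_set[OF L1 L2] by simp_all
  show "compact (A \<inter> ?S)"
    using \<open>closed A\<close> M(1) by (rule compact_Int_sphere_slice)
  show "A \<inter> ?S \<noteq> {}"
    using \<open>v \<in> A\<close> M(1) by (auto simp: sphere_slice_def subspace_0)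
  show "\<forall>f\<in>stab (orthogonal_comp L1) \<union> stab (orthogonal_comp L2). f ` (A \<inter> ?S) \<subseteq> A \<inter> ?S"
  proof
    fix f
    assume f: "f \<in> stab (orthogonal_comp L1) \<union> stab (orthogonal_comp L2)"
    then have "f ` ?S \<subseteq> ?S"
      using stab_image_sphere_slice_subset[OF L1 M(1,2)] stab_image_sphere_slice_subset[OF L2 M(1,3)]
      by blast
    with f inv show "f ` (A \<inter> ?S) \<subseteq> A \<inter> ?S"
      by blast
  qed
qed

lemma stab_orbit_residual_perp:
  fixes L1 L2 :: "'a::euclidean_space set"
  assumes L1: "subspace L1" and L2: "subspace L2"
    and "norm z = norm z0" "z - z0 \<in> vsum_set L1 L2"
    and "z - orth_proj L1 z \<in> orthogonal_comp L2" "z0 - orth_proj L1 z0 \<in> orthogonal_comp L2"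
  shows "\<exists>g\<in>stab (orthogonal_comp L1). g z0 = z"
proof -
  define M where "M = vsum_set L1 L2"
  have M: "subspace M" "L1 \<subseteq> M"
    using subspace_vsum_set[OF L1 L2] subset_vsum_set[OF L1 L2] by (simp_all add: M_def)
  define q where "q = z - orth_proj L1 z"
  define q0 where "q0 = z0 - orth_proj L1 z0"
  have q: "q \<in> orthogonal_comp L1" "q \<in> orthogonal_comp L2"
    and q0: "q0 \<in> orthogonal_comp L1" "q0 \<in> orthogonal_comp L2"
    using assms(5,6) orth_proj_perp[OF L1] by (simp_all add: q_def q0_def)
  have "orth_proj L1 z - orth_proj L1 z0 \<in> M"
    using M(2) subspace_diff[OF L1 orth_proj_in[OF L1] orth_proj_in[OF L1]] by blast
  then have "(z - z0) - (orth_proj L1 z - orth_proj L1 z0) \<in> M"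
    using M(1) assms(4) by (simp add: M_def subspace_diff)
  moreover have "(z - z0) - (orth_proj L1 z - orth_proj L1 z0) = q - q0"
    by (simp add: q_def q0_def)
  moreover have "q - q0 \<in> orthogonal_comp M"
    unfolding M_def orthogonal_comp_vsum_set[OF L1 L2]
    using q q0 by (blast intro: subspace_diff[OF subspace_orthogonal_comp])
  ultimately have "q - q0 \<in> M \<inter> orthogonal_comp M"
    by simp
  then have "q = q0"
    unfolding orthogonal_Int_0[OF M(1)] by simp
  have "z = q0 + orth_proj L1 z"
    unfolding \<open>q = q0\<close>[symmetric] q_def by simp
  have "z0 = q0 + orth_proj L1 z0"
    by (simp add: q0_def)
  have "(norm (orth_proj L1 z))\<^sup>2 = (norm (orth_proj L1 z0))\<^sup>2"
    using norm_orth_proj_Pythagorean[OF L1, of z] norm_orth_proj_Pythagorean[OF L1, of z0] assms(3)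
    unfolding q_def[symmetric] q0_def[symmetric] \<open>q = q0\<close> by simp
  then have "norm (orth_proj L1 z0) = norm (orth_proj L1 z)"
    by (simp add: power2_eq_iff_nonneg)
  then have "\<exists>g\<in>stab (orthogonal_comp L1). g (q0 + orth_proj L1 z0) = q0 + orth_proj L1 z"
    by (intro stab_transitive L1 q0(1) orth_proj_in)
  then show ?thesis
    using \<open>z = q0 + orth_proj L1 z\<close> \<open>z0 = q0 + orth_proj L1 z0\<close> by simp
qed

lemma mem_if_same_sphere_slice:
  fixes L1 L2 E :: "'a::euclidean_space set"
  assumes L1: "subspace L1" and L2: "subspace L2"
    and w: "w \<in> L1" "w \<in> L2" "norm w = 1"
    and "compact E"
    and inv: "\<forall>f\<in>stab (orthogonal_comp L1) \<union> stab (orthogonal_comp L2). f ` E = E"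
    and "x \<in> E" "norm y = norm x" "y - x \<in> vsum_set L1 L2"
  shows "y \<in> E"
proof -
  note slice_point = invariant_sphere_slice_has_point_with_residual_perp[OF L1 L2 w]
  have "closed E"
    using \<open>compact E\<close> by (rule compact_imp_closed)
  obtain z0 where z0: "z0 \<in> E" "norm z0 = norm x" "z0 - x \<in> vsum_set L1 L2"
    "z0 - orth_proj L1 z0 \<in> orthogonal_comp L2"
    using slice_point[OF \<open>closed E\<close> \<open>x \<in> E\<close>] inv by (auto simp: sphere_slice_def)
  define D where "D = {z. infdist z E = infdist y E}"
  have "closed D"
    unfolding D_def by (intro closed_Collect_eq continuous_intros continuous_on_id)
  moreover have "f ` D \<subseteq> D" if "f \<in> stab (orthogonal_comp L1) \<union> stab (orthogonal_comp L2)" for f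
    using that inv infdist_orthogonal_transformation[of f E] by (auto simp: D_def stab_def)
  ultimately obtain z where z: "infdist z E = infdist y E" "norm z = norm y"
    "z - y \<in> vsum_set L1 L2" "z - orth_proj L1 z \<in> orthogonal_comp L2"
    using slice_point[of D y] by (auto simp: D_def sphere_slice_def)
  have "(z - y) + (y - x) - (z0 - x) \<in> vsum_set L1 L2"
    using z(3) z0(3) assms(10) subspace_vsum_set[OF L1 L2] by (meson subspace_add subspace_diff)
  then obtain g where "g \<in> stab (orthogonal_comp L1)" "g z0 = z"
    using stab_orbit_residual_perp[OF L1 L2 _ _ z(4) z0(4)] z(2) z0(2) assms(9) by auto
  then have "z \<in> E"
    using inv z0(1) by blast
  then have "infdist y E = 0"
    using z(1) by simp
  then show "y \<in> E"
    using in_closed_iff_infdist_zero[OF \<open>closed E\<close>] \<open>x \<in> E\<close> by blast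
qed

theorem invariant_stab_vsum_set:
  fixes L1 L2 E :: "'a::euclidean_space set"
  assumes L1: "subspace L1" and L2: "subspace L2" and "L1 \<inter> L2 \<noteq> {0}"
    and "compact E"
    and inv: "\<forall>f\<in>stab (orthogonal_comp L1) \<union> stab (orthogonal_comp L2). f ` E = E"
  shows "\<forall>f\<in>stab (orthogonal_comp (vsum_set L1 L2)). f ` E = E"
proof
  have "0 \<in> L1 \<inter> L2"
    by (simp add: subspace_0[OF L1] subspace_0[OF L2])
  then obtain w0 where w0: "w0 \<in> L1" "w0 \<in> L2" "w0 \<noteq> 0"
    using assms(3) by blast
  define w where "w = w0 /\<^sub>R norm w0"
  have w: "w \<in> L1" "w \<in> L2" "norm w = 1"
    using w0 by (auto simp: w_def subspace_scale[OF L1] subspace_scale[OF L2])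
  note mem = mem_if_same_sphere_slice[OF L1 L2 w \<open>compact E\<close> inv]
  have M: "subspace (vsum_set L1 L2)"
    using L1 L2 by (rule subspace_vsum_set)
  fix f
  assume f: "f \<in> stab (orthogonal_comp (vsum_set L1 L2))"
  then have norm_f: "norm (f x) = norm x" for x
    by (simp add: stab_def orthogonal_transformation_norm)
  have "f x \<in> E" if "x \<in> E" for x
    using mem[OF that norm_f stab_diff_in[OF M f]] .
  moreover have "x \<in> f ` E" if "x \<in> E" for x
  proof -
    have "surj f"
      using f by (simp add: stab_def orthogonal_transformation_surj)
    then obtain y where y: "x = f y"
      by (metis surjD)
    have "y - x \<in> vsum_set L1 L2"
      using subspace_neg[OF M stab_diff_in[OF M f, of y]] y by simp
    moreover have "norm y = norm x"
      using norm_f y by simp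
    ultimately have "y \<in> E"
      using mem[OF that] by blast
    then show ?thesis
      using y by blast
  qed
  ultimately show "f ` E = E"
    by blast
qed

lemma refl_sub_image_subset_vsum_set:
  assumes H: "subspace H" and L: "subspace L"
  shows "refl_sub H ` L \<subseteq> vsum_set H L"
proof
  fix y
  assume "y \<in> refl_sub H ` L"
  then obtain l where "l \<in> L" "y = 2 *\<^sub>R orth_proj H l + - l"
    by (auto simp: refl_sub_def)
  moreover have "2 *\<^sub>R orth_proj H l \<in> H" "- l \<in> L"
    using \<open>l \<in> L\<close> by (simp_all add: subspace_scale[OF H] orth_proj_in[OF H] subspace_neg[OF L])
  ultimately show "y \<in> vsum_set H L"
    unfolding vsum_set_def by blast
qed

lemma refl_sub_orthogonal_comp_image:
  fixes H L :: "'a::euclidean_space set"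
  assumes H: "subspace H" and L: "subspace L"
  shows "refl_sub (orthogonal_comp H) ` L = refl_sub H ` L"
proof -
  have "refl_sub (orthogonal_comp H) ` L = refl_sub H ` uminus ` L"
    using linear_neg[OF orthogonal_transformation_linear[OF orthogonal_transformation_refl_sub[OF H]]]
    by (simp add: image_image refl_sub_orthogonal_comp[OF H])
  also have "uminus ` L = L"
    using subspace_neg[OF L] by (force intro: image_eqI[where x = "- _"])
  finally show ?thesis .
qed

lemma orthogonal_comp_refl_sub_image:
  fixes H L :: "'a::euclidean_space set"
  assumes H: "subspace H" and "H \<inter> orthogonal_comp L = {0}"
  shows "orthogonal_comp L \<inter> orthogonal_comp (refl_sub H ` L) \<subseteq> orthogonal_comp H"
proof
  fix q
  assume q: "q \<in> orthogonal_comp L \<inter> orthogonal_comp (refl_sub H ` L)"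
  have "l \<bullet> orth_proj H q = 0" if "l \<in> L" for l
  proof -
    have "l \<bullet> q = 0" "refl_sub H l \<bullet> q = 0"
      using q that by (auto simp: mem_orthogonal_comp_iff)
    then have "orth_proj H l \<bullet> q = 0"
      by (simp add: refl_sub_def inner_diff_left)
    then show ?thesis
      by (simp add: inner_orth_proj_commute[OF H])
  qed
  then have "orth_proj H q \<in> H \<inter> orthogonal_comp L"
    using orth_proj_in[OF H] by (simp add: mem_orthogonal_comp_iff)
  then have "orth_proj H q = 0"
    using assms(2) by blast
  then show "q \<in> orthogonal_comp H"
    using orth_proj_perp[OF H, of q] by simp
qed

lemma Int_linear_image_nontrivial:
  fixes f :: "'a::euclidean_space \<Rightarrow> 'a"
  assumes H: "subspace H" and L: "subspace L" and f: "linear f" "inj f"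
    and "f ` L \<subseteq> vsum_set H L" and "dim H < dim L"
  shows "L \<inter> f ` L \<noteq> {0}"
proof
  assume "L \<inter> f ` L = {0}"
  have fL: "subspace (f ` L)"
    using linear_subspace_image[OF f(1) L] .
  have "dim (f ` L) = dim L"
    using dim_image_eq[OF f(1)] f(2) by (simp add: inj_on_subset)
  moreover have "dim {x + y |x y. x \<in> L \<and> y \<in> f ` L} \<le> dim (vsum_set H L)"
    using assms(5) subset_vsum_set[OF H L] subspace_add[OF subspace_vsum_set[OF H L]]
    by (intro dim_subset) blast
  moreover have "dim (vsum_set H L) \<le> dim H + dim L"
    using dim_sums_Int[OF H L] by (simp add: vsum_set_def)
  ultimately show False
    using dim_sums_Int[OF L fL] \<open>L \<inter> f ` L = {0}\<close> \<open>dim H < dim L\<close> by simp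
qed

lemma invariant_stab_vsum_set_of_refl_sub_image:
  fixes H L E :: "'a::euclidean_space set"
  assumes H: "subspace H" and L: "subspace L"
    and "H \<inter> orthogonal_comp L = {0}" and "dim H < dim L" and "compact E"
    and "\<forall>f\<in>stab (orthogonal_comp L). f ` E = E"
    and "\<forall>f\<in>stab (orthogonal_comp (refl_sub H ` L)). f ` E = E"
  shows "\<forall>f\<in>stab (orthogonal_comp (vsum_set H L)). f ` E = E"
proof -
  have R: "linear (refl_sub H)" "inj (refl_sub H)"
    using orthogonal_transformation_refl_sub[OF H]
    by (simp_all add: orthogonal_transformation_linear orthogonal_transformation_inj)
  have L': "subspace (refl_sub H ` L)"
    using linear_subspace_image[OF R(1) L] .
  have "L \<inter> refl_sub H ` L \<noteq> {0}"
    using Int_linear_image_nontrivial[OF H L R refl_sub_image_subset_vsum_set[OF H L]] assms(4) .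
  then have "\<forall>f\<in>stab (orthogonal_comp (vsum_set L (refl_sub H ` L))). f ` E = E"
    using invariant_stab_vsum_set[OF L L' _ \<open>compact E\<close>] assms(6,7) by blast
  moreover have "orthogonal_comp (vsum_set L (refl_sub H ` L)) \<subseteq> orthogonal_comp (vsum_set H L)"
    using orthogonal_comp_refl_sub_image[OF H assms(3)]
    by (auto simp: orthogonal_comp_vsum_set H L L')
  ultimately show ?thesis
    using stab_antimono by blast
qed

theorem lemma3p7:
  fixes H L E :: "'a::euclidean_space set"
  assumes "subspace H" and "subspace L"
    and "H \<inter> orthogonal_comp L = {0}"
    and "dim H < dim L"
    and "E \<subseteq> sphere 0 1" and "E \<noteq> {}" and "closed E"
    and "\<forall>f\<in>stab (orthogonal_comp L). f ` E = E"
  shows "(refl_sub H ` E = E \<longrightarrow> (\<forall>f\<in>stab (orthogonal_comp (vsum_set H L)). f ` E = E))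
       \<and> (refl_sub (orthogonal_comp H) ` E = E \<longrightarrow> (\<forall>f\<in>stab (orthogonal_comp (vsum_set H L)). f ` E = E))"
proof -
  have "compact E"
    using assms(5,7) bounded_subset[OF bounded_sphere] by (simp add: compact_eq_bounded_closed)
  note from_refl_image = invariant_stab_vsum_set_of_refl_sub_image[OF assms(1-4) \<open>compact E\<close> assms(8)]
  have R: "orthogonal_transformation (refl_sub H)"
    "orthogonal_transformation (refl_sub (orthogonal_comp H))"
    using assms(1) by (simp_all add: orthogonal_transformation_refl_sub subspace_orthogonal_comp)
  note same_image = refl_sub_orthogonal_comp_image[OF assms(1,2)]
  show ?thesis
  proof (intro conjI impI)
    assume "refl_sub H ` E = E"
    from stab_image_invariant[OF R(1) this assms(8)]
    show "\<forall>f\<in>stab (orthogonal_comp (vsum_set H L)). f ` E = E"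
      by (rule from_refl_image)
  next
    assume "refl_sub (orthogonal_comp H) ` E = E"
    from stab_image_invariant[OF R(2) this assms(8)]
    show "\<forall>f\<in>stab (orthogonal_comp (vsum_set H L)). f ` E = E"
      unfolding same_image by (rule from_refl_image)
  qed
qed

end
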